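(* Let $A$ be a DFA over a finite alphabet $\Sigma$ and let $S=s_1,\ldots,s_l$ be any non-empty sequence of strings $s_i\in\Sigma^*$. Any execution of prefix-free IDS on $S$ (with teacher $A$) terminates, with the program variable $k$ having value $l$.
   Context: Let $A=\langle\Sigma,Q,F,q_0,\delta\rangle$ be a DFA with language $L(A)$; $\lambda$ is the empty string; membership queries to $A$ are answered correctly. Let $d_0$ be a fresh symbol not in $\Sigma^*$; $f(d_0,b)=d_0$, $f(\alpha,b)=\alpha b$ for $\alpha\in\Sigma^*$; $U\oplus V=(U-V)\cup(V-U)$. Refinement procedure (w.r.t. $P'_k$, $T_k$): while there exist $\alpha,\beta\in P'_k$, $b\in\Sigma$ with $E_i(\alpha)=E_i(\beta)$ but $E_i(f(\alpha,b))\neq E_i(f(\beta,b))$: choose (nondeterministically) such $\alpha,\beta,b$ and $\gamma\in E_i(f(\alpha,b))\oplus E_i(f(\beta,b))$, set $v_{i+1}=b\gamma$, increase $i$, and for each $\alpha'\in T_k$ set $E_i(\alpha')=E_{i-1}(\alpha')\cup\{v_i\}$ if $\alpha'v_i\in L(A)$, else $E_i(\alpha')=E_{i-1}(\alpha')$; always $E_i(d_0)=\emptyset$. Construction procedure: states $E_i(\alpha)$, $\alpha\in T_k$; initial state $E_i(\lambda)$; accepting states those containing $\lambda$; for $\alpha\in P'_k$: if $E_i(\alpha)=\emptyset$ add self-loops for all $b$, else $\delta(E_i(\alpha),b)=E_i(f(\alpha,b))$; for $\beta\in T_k-P'_k$ with $E_i(\beta)\neq E_i(\alpha)$ for all $\alpha\in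 P'_k$ and $E_i(\beta)\ne\emptyset$, $\delta(E_i(\beta),b)=\emptyset$ for all $b$. Prefix-free IDS on $S$: initialize $i=k=t=0$, $v_0=\lambda$, $P_0=\{\lambda\}$, $P'_0=P_0\cup\{d_0\}$, $T_0=\{\lambda\}\cup\Sigma$, $E_0(\alpha)=\{\lambda\}$ if $\alpha\in L(A)$ else $\emptyset$ ($\alpha\in T_0$); refine; construct $M_0$. While $S$ is non-empty: read the next string $\alpha$ (removing it from $S$); increase $k,t$ by one; $P_k=P_{k-1}\cup\{\alpha\}$, $P'_k=P_k\cup\{d_0\}$, $T_k=T_{k-1}\cup\{\alpha\}\cup\{\alpha b:b\in\Sigma\}$; for $\beta\in T_k-T_{k-1}$ set $E_i(\beta)=\{v_j:0\le j\le i,\beta v_j\in L(A)\}$; refine; set $M_t=M_{t-1}$ if $M_{t-1}$ accepts $\alpha$ iff $\alpha\in L(A)$, else construct $M_t$. *)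

theory Defs
  imports Main
begin

definition dfa :: "'a set \<Rightarrow> 'q set \<Rightarrow> 'q set \<Rightarrow> 'q \<Rightarrow> ('q \<Rightarrow> 'a \<Rightarrow> 'q) \<Rightarrow> bool" where
  "dfa \<Sigma> Q F q0 \<delta> \<longleftrightarrow> finite \<Sigma> \<and> finite Q \<and> F \<subseteq> Q \<and> q0 \<in> Q \<and>
     (\<forall>q\<in>Q. \<forall>a\<in>\<Sigma>. \<delta> q a \<in> Q)"

definition dfa_lang :: "'a set \<Rightarrow> 'q set \<Rightarrow> 'q \<Rightarrow> ('q \<Rightarrow> 'a \<Rightarrow> 'q) \<Rightarrow> 'a list set" where
  "dfa_lang \<Sigma> F q0 \<delta> = {w. set w \<subseteq> \<Sigma> \<and> foldl \<delta> q0 w \<in> F}"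

text \<open>Strings are lists; the fresh symbol d0 is None, a string alpha is Some alpha.\<close>

fun fx :: "'a list option \<Rightarrow> 'a \<Rightarrow> 'a list option" where
  "fx None b = None"
| "fx (Some \<alpha>) b = Some (\<alpha> @ [b])"

definition symdiff :: "'b set \<Rightarrow> 'b set \<Rightarrow> 'b set" where
  "symdiff U V = (U - V) \<union> (V - U)"

text \<open>Hypothesis automata produced by the construction procedure: states are sets of
  experiments; transitions given as a relation (at most one successor in practice,
  none meaning the automaton rejects).\<close>
record 'a hyp =
  hstates :: "'a list set set"
  hinit :: "'a list set"
  hacc :: "'a list set set"
  htrans :: "('a list set \<times> 'a \<times> 'a list set) set"

fun hreach :: "'a hyp \<Rightarrow> 'a list set \<Rightarrow> 'a list \<Rightarrow> 'a list set set" where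
  "hreach M q [] = {q}"
| "hreach M q (b # w) = \<Union> {hreach M q' w | q'. (q, b, q') \<in> htrans M}"

definition haccepts :: "'a hyp \<Rightarrow> 'a list \<Rightarrow> bool" where
  "haccepts M w \<longleftrightarrow> (\<exists>q\<in>hreach M (hinit M) w. q \<in> hacc M)"

definition hyp_empty :: "'a hyp" where
  "hyp_empty = \<lparr>hstates = {}, hinit = {}, hacc = {}, htrans = {}\<rparr>"

datatype 'a phase = RefineInit | RefineAfter "'a list" | Loop

text \<open>Program state. vs = [v_0, ..., v_i]; P = P_k (strings); P'_k = Some ` P \<union> {None};
  T = T_k (strings); E x = E_i(x); M = current hypothesis M_t; rest = unread part of S;
  phase records whether we are inside the initial refinement, inside the refinement
  after reading a string alpha, or at the head of the main while loop.\<close>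
record 'a ids_state =
  phase :: "'a phase"
  rest :: "'a list list"
  ii :: nat
  kk :: nat
  tt :: nat
  vs :: "'a list list"
  PP :: "'a list set"
  TT :: "'a list set"
  EE :: "'a list option \<Rightarrow> 'a list set"
  MM :: "'a hyp"

definition Pp :: "('a, 'b) ids_state_scheme \<Rightarrow> 'a list option set" where
  "Pp c = Some ` PP c \<union> {None}"

definition can_refine :: "'a set \<Rightarrow> 'a ids_state \<Rightarrow> bool" where
  "can_refine \<Sigma> c \<longleftrightarrow> (\<exists>\<alpha>\<in>Pp c. \<exists>\<beta>\<in>Pp c. \<exists>b\<in>\<Sigma>.
      EE c \<alpha> = EE c \<beta> \<and> EE c (fx \<alpha> b) \<noteq> EE c (fx \<beta> b))"

definition refine_add :: "'a list set \<Rightarrow> 'a ids_state \<Rightarrow> 'a list \<Rightarrow> 'a ids_state" where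
  "refine_add L c v = c\<lparr> ii := Suc (ii c), vs := vs c @ [v],
     EE := (\<lambda>x. case x of None \<Rightarrow> {}
                | Some a \<Rightarrow> (if a \<in> TT c \<and> a @ v \<in> L then EE c (Some a) \<union> {v}
                             else EE c (Some a))) \<rparr>"

definition construct :: "'a set \<Rightarrow> 'a ids_state \<Rightarrow> 'a hyp" where
  "construct \<Sigma> c = (let E = EE c; Sts = E ` Some ` TT c in
     \<lparr> hstates = Sts,
       hinit = E (Some []),
       hacc = {X \<in> Sts. [] \<in> X},
       htrans =
         {(E \<alpha>, b, E (fx \<alpha> b)) | \<alpha> b. \<alpha> \<in> Pp c \<and> E \<alpha> \<noteq> {} \<and> b \<in> \<Sigma>}
       \<union> {(E \<alpha>, b, E \<alpha>) | \<alpha> b. \<alpha> \<in> Pp c \<and> E \<alpha> = {} \<and> b \<in> \<Sigma>}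
       \<union> {(E (Some \<beta>), b, {}) | \<beta> b. \<beta> \<in> TT c - PP c \<and>
              (\<forall>\<alpha>\<in>Pp c. E (Some \<beta>) \<noteq> E \<alpha>) \<and> E (Some \<beta>) \<noteq> {} \<and> b \<in> \<Sigma>} \<rparr>)"

definition read_string :: "'a set \<Rightarrow> 'a list set \<Rightarrow> 'a ids_state \<Rightarrow> 'a list \<Rightarrow> 'a list list \<Rightarrow> 'a ids_state" where
  "read_string \<Sigma> L c \<alpha> S' = (let T' = TT c \<union> {\<alpha>} \<union> {\<alpha> @ [b] | b. b \<in> \<Sigma>} in
     c\<lparr> phase := RefineAfter \<alpha>, rest := S', kk := Suc (kk c), tt := Suc (tt c),
        PP := insert \<alpha> (PP c), TT := T',
        EE := (\<lambda>x. case x of None \<Rightarrow> {}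
                 | Some \<beta> \<Rightarrow> (if \<beta> \<in> T' - TT c
                              then {vs c ! j | j. j \<le> ii c \<and> \<beta> @ vs c ! j \<in> L}
                              else EE c (Some \<beta>))) \<rparr>)"

definition ids_init :: "'a set \<Rightarrow> 'a list set \<Rightarrow> 'a list list \<Rightarrow> 'a ids_state" where
  "ids_init \<Sigma> L S = (let T0 = {[]} \<union> {[b] | b. b \<in> \<Sigma>} in
     \<lparr> phase = RefineInit, rest = S, ii = 0, kk = 0, tt = 0, vs = [[]],
       PP = {[]}, TT = T0,
       EE = (\<lambda>x. case x of None \<Rightarrow> {}
               | Some a \<Rightarrow> (if a \<in> T0 \<and> a \<in> L then {[]} else {})),
       MM = hyp_empty \<rparr>)"

inductive ids_step :: "'a set \<Rightarrow> 'a list set \<Rightarrow> 'a ids_state \<Rightarrow> 'a ids_state \<Rightarrow> bool"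
  for \<Sigma> :: "'a set" and L :: "'a list set" where
  refine: "\<lbrakk> phase c \<noteq> Loop; \<alpha> \<in> Pp c; \<beta> \<in> Pp c; b \<in> \<Sigma>;
             EE c \<alpha> = EE c \<beta>; EE c (fx \<alpha> b) \<noteq> EE c (fx \<beta> b);
             \<gamma> \<in> symdiff (EE c (fx \<alpha> b)) (EE c (fx \<beta> b)) \<rbrakk>
           \<Longrightarrow> ids_step \<Sigma> L c (refine_add L c (b # \<gamma>))"
| finish_init: "\<lbrakk> phase c = RefineInit; \<not> can_refine \<Sigma> c \<rbrakk>
           \<Longrightarrow> ids_step \<Sigma> L c (c\<lparr> phase := Loop, MM := construct \<Sigma> c \<rparr>)"
| finish_after: "\<lbrakk> phase c = RefineAfter \<alpha>; \<not> can_refine \<Sigma> c \<rbrakk>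
           \<Longrightarrow> ids_step \<Sigma> L c (c\<lparr> phase := Loop,
                 MM := (if (haccepts (MM c) \<alpha> \<longleftrightarrow> \<alpha> \<in> L) then MM c else construct \<Sigma> c) \<rparr>)"
| read: "\<lbrakk> phase c = Loop; rest c = \<alpha> # S' \<rbrakk>
           \<Longrightarrow> ids_step \<Sigma> L c (read_string \<Sigma> L c \<alpha> S')"

end

theory Submission
  imports Defs
begin

text \<open>Every refinement adds an experiment that splits two rows of the observation table
  indexed by P'_k, so the number of distinct rows grows. Rows are determined by the DFA state
  reached (a row is empty or a residual language of A intersected with the current experiments),
  hence at most |Q| + 1 distinct rows occur and every refinement loop stops. Together with the
  finitely many strings of S this yields a decreasing measure; at a halting state no refinement
  and no read is possible, so S has been consumed, and k counts the strings read.\<close>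

definition obs_row :: "'a list set \<Rightarrow> 'a list set \<Rightarrow> 'a list set \<Rightarrow> 'a list option \<Rightarrow> 'a list set" where
  "obs_row L T V x = (case x of None \<Rightarrow> {} | Some a \<Rightarrow> if a \<in> T then {v \<in> V. a @ v \<in> L} else {})"

definition ids_inv :: "'a set \<Rightarrow> 'a list set \<Rightarrow> 'a ids_state \<Rightarrow> bool" where
  "ids_inv \<Sigma> L c \<longleftrightarrow> PP c \<subseteq> TT c \<and> (\<forall>a\<in>PP c. \<forall>b\<in>\<Sigma>. a @ [b] \<in> TT c)
     \<and> EE c = obs_row L (TT c) (set (vs c)) \<and> length (vs c) = Suc (ii c)"

definition row_classes :: "'a ids_state \<Rightarrow> 'a list set set" where
  "row_classes c = EE c ` Pp c"

lemma ids_inv_init: "ids_inv \<Sigma> L (ids_init \<Sigma> L S)"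
  by (auto simp: ids_inv_def ids_init_def obs_row_def fun_eq_iff split: option.split)

lemma EE_refine_add:
  "EE c = obs_row L (TT c) V \<Longrightarrow> EE (refine_add L c v) = obs_row L (TT c) (insert v V)"
  by (auto simp: refine_add_def obs_row_def fun_eq_iff split: option.split)

lemma EE_read_string:
  assumes "EE c = obs_row L (TT c) (set (vs c))" and "length (vs c) = Suc (ii c)"
  shows "EE (read_string \<Sigma> L c \<alpha> S') = obs_row L (TT (read_string \<Sigma> L c \<alpha> S')) (set (vs c))"
proof -
  have "{vs c ! j |j. j \<le> ii c \<and> \<beta> @ vs c ! j \<in> L} = {v \<in> set (vs c). \<beta> @ v \<in> L}" for \<beta>
    using assms(2) by (auto simp: in_set_conv_nth less_Suc_eq_le)
  then show ?thesis
    using assms(1) by (auto simp: read_string_def Let_def obs_row_def fun_eq_iff split: option.split)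
qed

lemma ids_inv_step:
  assumes "ids_inv \<Sigma> L c" and "ids_step \<Sigma> L c c'"
  shows "ids_inv \<Sigma> L c'"
  using assms(2)
proof cases
  case (refine \<alpha> \<beta> b \<gamma>)
  then show ?thesis
    using assms(1) EE_refine_add[of c L "set (vs c)" "b # \<gamma>"]
    by (simp add: ids_inv_def refine_add_def)
next
  case (read \<alpha> S')
  then show ?thesis
    using assms(1) EE_read_string[of c L \<Sigma> \<alpha> S']
    by (auto simp: ids_inv_def read_string_def Let_def)
qed (use assms(1) in \<open>simp_all add: ids_inv_def\<close>)

lemma foldl_in_states:
  "dfa \<Sigma> Q F q0 \<delta> \<Longrightarrow> q \<in> Q \<Longrightarrow> set w \<subseteq> \<Sigma> \<Longrightarrow> foldl \<delta> q w \<in> Q"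
  by (induction w arbitrary: q) (auto simp: dfa_def)

lemma dfa_lang_append_iff:
  "set a \<subseteq> \<Sigma> \<Longrightarrow> a @ v \<in> dfa_lang \<Sigma> F q0 \<delta> \<longleftrightarrow> v \<in> dfa_lang \<Sigma> F (foldl \<delta> q0 a) \<delta>"
  by (simp add: dfa_lang_def)

lemma card_obs_rows_le:
  fixes T V :: "'a list set" and P :: "'a list option set"
  assumes "dfa \<Sigma> Q F q0 \<delta>"
  defines "R \<equiv> obs_row (dfa_lang \<Sigma> F q0 \<delta>) T V ` P"
  shows "finite R \<and> card R \<le> Suc (card Q)"
proof -
  define state_row where "state_row q = {v \<in> V. v \<in> dfa_lang \<Sigma> F q \<delta>}" for q
  have "finite Q" using assms(1) by (simp add: dfa_def)
  have "R \<subseteq> insert {} (state_row ` Q)"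
  proof
    fix X assume "X \<in> R"
    then obtain x where X: "X = obs_row (dfa_lang \<Sigma> F q0 \<delta>) T V x" by (auto simp: R_def)
    show "X \<in> insert {} (state_row ` Q)"
    proof (cases "\<exists>a. x = Some a \<and> a \<in> T \<and> set a \<subseteq> \<Sigma>")
      case True
      then obtain a where a: "x = Some a" "a \<in> T" "set a \<subseteq> \<Sigma>" by blast
      then have "X = state_row (foldl \<delta> q0 a)"
        using X dfa_lang_append_iff[OF a(3), of _ F q0 \<delta>] by (simp add: obs_row_def state_row_def)
      moreover have "foldl \<delta> q0 a \<in> Q"
        using foldl_in_states[OF assms(1)] assms(1) a(3) by (simp add: dfa_def)
      ultimately show ?thesis by blast
    next
      case False
      then have "X = {}" using X by (auto simp: obs_row_def dfa_lang_def split: option.split)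
      then show ?thesis by simp
    qed
  qed
  moreover have "card (insert {} (state_row ` Q)) \<le> Suc (card Q)"
    using \<open>finite Q\<close> card_image_le[of Q state_row] card_insert_le_m1 by (simp add: card_insert_if)
  ultimately show ?thesis
    using \<open>finite Q\<close> by (meson card_mono finite_imageI finite_insert finite_subset order_trans)
qed

lemma card_row_classes_le:
  "dfa \<Sigma> Q F q0 \<delta> \<Longrightarrow> ids_inv \<Sigma> (dfa_lang \<Sigma> F q0 \<delta>) c
    \<Longrightarrow> finite (row_classes c) \<and> card (row_classes c) \<le> Suc (card Q)"
  using card_obs_rows_le by (simp add: ids_inv_def row_classes_def)

lemma card_obs_rows_insert_less:
  assumes "finite (obs_row L T (insert v V) ` P)" and "v \<notin> V"
    and "x \<in> P" "y \<in> P" "obs_row L T V x = obs_row L T V y"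
    and "v \<in> obs_row L T (insert v V) x" "v \<notin> obs_row L T (insert v V) y"
  shows "card (obs_row L T V ` P) < card (obs_row L T (insert v V) ` P)"
proof -
  let ?drop = "\<lambda>X. X - {v}"
  have drop_row: "?drop (obs_row L T (insert v V) z) = obs_row L T V z" for z
    using assms(2) by (auto simp: obs_row_def split: option.split)
  have "\<not> inj_on ?drop (obs_row L T (insert v V) ` P)"
    using assms(3-7) drop_row by (metis image_eqI inj_onD)
  then have "card (?drop ` obs_row L T (insert v V) ` P) \<noteq> card (obs_row L T (insert v V) ` P)"
    using inj_on_iff_eq_card[OF assms(1)] by blast
  moreover have "?drop ` obs_row L T (insert v V) ` P = obs_row L T V ` P"
    by (simp add: image_image drop_row)
  ultimately show ?thesis using card_image_le[OF assms(1), of ?drop] by simp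
qed

lemma refine_experiment_separates:
  assumes inv: "ids_inv \<Sigma> L c" and "\<alpha> \<in> Pp c" "\<beta> \<in> Pp c" "b \<in> \<Sigma>" "EE c \<alpha> = EE c \<beta>"
    and \<gamma>: "\<gamma> \<in> EE c (fx \<alpha> b) - EE c (fx \<beta> b)"
  defines "V \<equiv> insert (b # \<gamma>) (set (vs c))"
  shows "b # \<gamma> \<notin> set (vs c) \<and> b # \<gamma> \<in> obs_row L (TT c) V \<alpha> \<and> b # \<gamma> \<notin> obs_row L (TT c) V \<beta>"
proof -
  have E: "EE c = obs_row L (TT c) (set (vs c))"
    and ext: "\<And>a. a \<in> PP c \<Longrightarrow> a \<in> TT c \<and> a @ [b] \<in> TT c"
    using inv \<open>b \<in> \<Sigma>\<close> by (auto simp: ids_inv_def)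
  obtain a where a: "\<alpha> = Some a" "a \<in> PP c"
    using \<open>\<alpha> \<in> Pp c\<close> \<gamma> E by (cases \<alpha>) (auto simp: Pp_def obs_row_def)
  have "\<gamma> \<in> set (vs c)" and "a @ b # \<gamma> \<in> L"
    using \<gamma> a ext E by (auto simp: obs_row_def)
  then have in_\<alpha>: "b # \<gamma> \<in> obs_row L (TT c) V \<alpha>"
    using a ext by (simp add: obs_row_def V_def)
  have not_in_\<beta>: "b # \<gamma> \<notin> obs_row L (TT c) V \<beta>"
  proof (cases \<beta>)
    case (Some a')
    then have "a' @ [b] \<in> TT c" using \<open>\<beta> \<in> Pp c\<close> ext by (auto simp: Pp_def)
    then show ?thesis
      using Some \<gamma> \<open>\<gamma> \<in> set (vs c)\<close> E by (auto simp: obs_row_def)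
  qed (simp add: obs_row_def)
  have "b # \<gamma> \<notin> set (vs c)"
  proof
    assume "b # \<gamma> \<in> set (vs c)"
    then have "b # \<gamma> \<in> EE c \<alpha> - EE c \<beta>"
      using in_\<alpha> not_in_\<beta> E by (auto simp: obs_row_def V_def split: option.splits)
    then show False using \<open>EE c \<alpha> = EE c \<beta>\<close> by simp
  qed
  then show ?thesis using in_\<alpha> not_in_\<beta> by blast
qed

lemma refine_add_increases_row_classes:
  assumes "dfa \<Sigma> Q F q0 \<delta>" and inv: "ids_inv \<Sigma> (dfa_lang \<Sigma> F q0 \<delta>) c"
    and "\<alpha> \<in> Pp c" "\<beta> \<in> Pp c" "b \<in> \<Sigma>" "EE c \<alpha> = EE c \<beta>"
    and "\<gamma> \<in> symdiff (EE c (fx \<alpha> b)) (EE c (fx \<beta> b))"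
  shows "card (row_classes c) < card (row_classes (refine_add (dfa_lang \<Sigma> F q0 \<delta>) c (b # \<gamma>)))"
proof -
  let ?L = "dfa_lang \<Sigma> F q0 \<delta>" and ?v = "b # \<gamma>"
  let ?V = "insert ?v (set (vs c))"
  have E: "EE c = obs_row ?L (TT c) (set (vs c))" using inv by (simp add: ids_inv_def)
  have classes: "row_classes c = obs_row ?L (TT c) (set (vs c)) ` Pp c"
    "row_classes (refine_add ?L c ?v) = obs_row ?L (TT c) ?V ` Pp c"
    using EE_refine_add[OF E] E by (simp_all add: row_classes_def Pp_def refine_add_def)
  obtain x y where "x \<in> Pp c" "y \<in> Pp c" "EE c x = EE c y" "?v \<notin> set (vs c)"
    "?v \<in> obs_row ?L (TT c) ?V x" "?v \<notin> obs_row ?L (TT c) ?V y"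
    using assms(3-7) refine_experiment_separates[OF inv] by (auto simp: symdiff_def)
  moreover have "finite (obs_row ?L (TT c) ?V ` Pp c)"
    using card_obs_rows_le[OF assms(1)] by blast
  ultimately show ?thesis
    unfolding classes using card_obs_rows_insert_less E by metis
qed

text \<open>With K bounding the number of rows, reading a string gains K + 2 and the refinement
  phase it opens costs at most K + 1.\<close>

definition ids_measure :: "nat \<Rightarrow> 'a ids_state \<Rightarrow> nat" where
  "ids_measure K c =
     length (rest c) * (K + 2) + (if phase c = Loop then 0 else Suc K - card (row_classes c))"

lemma ids_measure_decreases:
  assumes "dfa \<Sigma> Q F q0 \<delta>" and inv: "ids_inv \<Sigma> (dfa_lang \<Sigma> F q0 \<delta>) c"
    and step: "ids_step \<Sigma> (dfa_lang \<Sigma> F q0 \<delta>) c c'"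
  shows "ids_measure (Suc (card Q)) c' < ids_measure (Suc (card Q)) c"
proof -
  have bound: "card (row_classes c) \<le> Suc (card Q)" "card (row_classes c') \<le> Suc (card Q)"
    using card_row_classes_le[OF assms(1)] inv ids_inv_step[OF inv step] by blast+
  from step show ?thesis
  proof cases
    case (refine \<alpha> \<beta> b \<gamma>)
    then have "card (row_classes c) < card (row_classes c')"
      using refine_add_increases_row_classes[OF assms(1) inv] by blast
    then show ?thesis using refine bound by (simp add: ids_measure_def refine_add_def)
  next
    case (read \<alpha> S')
    then show ?thesis by (simp add: ids_measure_def read_string_def)
  qed (use bound in \<open>simp_all add: ids_measure_def\<close>)
qed

lemma no_infinite_run_if_measure_decreases:
  fixes m :: "'s \<Rightarrow> nat"
  assumes decreases: "\<And>c c'. I c \<Longrightarrow> r c c' \<Longrightarrow> I c' \<and> m c' < m c"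
    and "I (g 0)" and run: "\<forall>n. r (g n) (g (Suc n))"
  shows False
proof -
  have "I (g n) \<and> m (g n) + n \<le> m (g 0)" for n
  proof (induction n)
    case (Suc n)
    then show ?case using decreases[of "g n" "g (Suc n)"] run by fastforce
  qed (simp add: \<open>I (g 0)\<close>)
  from this[of "Suc (m (g 0))"] show False by simp
qed

lemma ids_halted:
  assumes "\<forall>c'. \<not> ids_step \<Sigma> L c c'"
  shows "phase c = Loop \<and> rest c = []"
proof -
  have "phase c = Loop"
  proof (rule ccontr)
    assume np: "phase c \<noteq> Loop"
    show False
    proof (cases "can_refine \<Sigma> c")
      case True
      then obtain \<alpha> \<beta> b where ab: "\<alpha> \<in> Pp c" "\<beta> \<in> Pp c" "b \<in> \<Sigma>" "EE c \<alpha> = EE c \<beta>"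
        "EE c (fx \<alpha> b) \<noteq> EE c (fx \<beta> b)" unfolding can_refine_def by blast
      then obtain \<gamma> where "\<gamma> \<in> symdiff (EE c (fx \<alpha> b)) (EE c (fx \<beta> b))"
        unfolding symdiff_def by blast
      then show False using ids_step.refine[OF np ab] assms by blast
    next
      case False
      then show False using np assms ids_step.finish_init ids_step.finish_after
        by (cases "phase c") blast+
    qed
  qed
  moreover have "rest c = []"
    using assms ids_step.read[OF \<open>phase c = Loop\<close>] by (cases "rest c") blast+
  ultimately show ?thesis by simp
qed

lemma ids_step_kk_plus_rest:
  "ids_step \<Sigma> L c c' \<Longrightarrow> kk c' + length (rest c') = kk c + length (rest c)"
  by (induction rule: ids_step.induct) (auto simp: refine_add_def read_string_def)

lemma ids_reachable_kk_plus_rest: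
  "(ids_step \<Sigma> L)\<^sup>*\<^sup>* (ids_init \<Sigma> L S) c \<Longrightarrow> kk c + length (rest c) = length S"
  by (induction rule: rtranclp_induct) (auto simp: ids_init_def dest: ids_step_kk_plus_rest)

theorem mainTheorem4:
  fixes \<Sigma> :: "'a set" and Q F :: "'q set" and q0 :: 'q and \<delta> :: "'q \<Rightarrow> 'a \<Rightarrow> 'q"
    and S :: "'a list list"
  assumes "dfa \<Sigma> Q F q0 \<delta>"
    and "S \<noteq> []"
    and "\<forall>s\<in>set S. set s \<subseteq> \<Sigma>"
  shows "\<not> (\<exists>g. g 0 = ids_init \<Sigma> (dfa_lang \<Sigma> F q0 \<delta>) S \<and>
              (\<forall>n. ids_step \<Sigma> (dfa_lang \<Sigma> F q0 \<delta>) (g n) (g (Suc n))))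
     \<and> (\<forall>c. (ids_step \<Sigma> (dfa_lang \<Sigma> F q0 \<delta>))\<^sup>*\<^sup>* (ids_init \<Sigma> (dfa_lang \<Sigma> F q0 \<delta>) S) c
             \<and> (\<forall>c'. \<not> ids_step \<Sigma> (dfa_lang \<Sigma> F q0 \<delta>) c c')
           \<longrightarrow> phase c = Loop \<and> rest c = [] \<and> kk c = length S)"
proof
  let ?L = "dfa_lang \<Sigma> F q0 \<delta>"
  show "\<not> (\<exists>g. g 0 = ids_init \<Sigma> ?L S \<and> (\<forall>n. ids_step \<Sigma> ?L (g n) (g (Suc n))))"
    using no_infinite_run_if_measure_decreases[where I = "ids_inv \<Sigma> ?L" and r = "ids_step \<Sigma> ?L"
        and m = "ids_measure (Suc (card Q))"]
      ids_inv_step ids_measure_decreases[OF assms(1)] ids_inv_init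
    by metis
  show "\<forall>c. (ids_step \<Sigma> ?L)\<^sup>*\<^sup>* (ids_init \<Sigma> ?L S) c \<and> (\<forall>c'. \<not> ids_step \<Sigma> ?L c c')
           \<longrightarrow> phase c = Loop \<and> rest c = [] \<and> kk c = length S"
    using ids_halted ids_reachable_kk_plus_rest by fastforce
qed

end
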